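(* Let $\mathfrak h_3=\mathbb{R}^3$ with basis $e_1,e_2,e_3$ and Lie bracket $\mu$ given by $\mu(e_1,e_2)=e_3$, $\mu(e_1,e_3)=\mu(e_2,e_3)=0$ (the Heisenberg Lie algebra), dual basis $e^1,e^2,e^3$, and let $g_0=e^1\otimes e^1+e^2\otimes e^2+e^3\otimes e^3$, with orientation $e^{123}=e^1\wedge e^2\wedge e^3$. Let $a,\lambda\in\mathbb{R}$, $H_0=a\,e^{123}$, $\theta_0=\theta_ie^i\in\mathfrak h_3^*$, $\omega\in\Lambda^2\mathfrak h_3^*$, and let $D$ be a derivation of $\mathfrak h_3$ that is symmetric with respect to $g_0$. Then the generalized Ricci soliton equations \[ \mathrm{Rc}_{g_0}=\lambda g_0+g_0(D\cdot,\cdot)+\tfrac14H_0\circ_{g_0}H_0-\tfrac14\mathcal{L}_{g_0^{-1}\theta_0}g_0,\qquad \omega=-d^*_{g_0}H_0+\tfrac12 d\theta_0-\tfrac12\iota_{g_0^{-1}\theta_0}H_0 \] hold if and only if \[ \lambda=-\tfrac12(3+a^2),\quad D=e^1\otimes e_1+e^2\otimes e_2+2\,e^3\otimes e_3,\quad \theta_1=\theta_2=0,\quad \omega=-\tfrac12\theta_3(1+a)\,e^1\wedge e^2 . \] In particular $g_0$ is a generalized Ricci soliton for every $a,\theta_3\in\mathbb{R}$.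
   Context: All tensors are left-invariant on the Heisenberg group and identified with tensors on $\mathfrak h_3$. $\mathrm{Rc}_{g_0}$ is the Ricci tensor of the left-invariant metric $g_0$. $(H\circ_gH)(X,Y)=g(\iota_XH,\iota_YH)$ with $g$ the induced metric on 2-forms (in coordinates $g^{rl}g^{st}H_{irs}H_{jlt}$). For left-invariant $X$, $(\mathcal{L}_Xg)(Y,Z)=-g(\mu(X,Y),Z)-g(Y,\mu(X,Z))$; $g_0^{-1}\theta_0$ is the vector $g_0$-dual to $\theta_0$. For a left-invariant 1-form, $d\theta(X,Y)=-\theta(\mu(X,Y))$. $d^*_g=-{*_g}\,d\,{*_g}$ is the codifferential defined with the Hodge star of $g$ and the fixed orientation. A derivation is $D\in\mathfrak{gl}(\mathfrak h_3)$ with $D\mu(X,Y)=\mu(DX,Y)+\mu(X,DY)$. A Riemannian metric $g_0$ is a generalized Ricci soliton if such $\lambda,D,H_0$ (closed), $\theta_0,\omega$ exist. *)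

theory Defs
  imports "HOL-Analysis.Analysis"
begin

text \<open>The Heisenberg Lie algebra h3 = R^3 (type real^3, basis e_i = axis i 1, i = 1,2,3;
  note that in the index type 3 the numeral 3 equals 0). All left-invariant tensors are
  identified with multilinear maps on real^3.\<close>

type_synonym vec3 = "real ^ 3"
type_synonym bform = "vec3 \<Rightarrow> vec3 \<Rightarrow> real"
type_synonym tform = "vec3 \<Rightarrow> vec3 \<Rightarrow> vec3 \<Rightarrow> real"

definition ebas :: "3 \<Rightarrow> vec3" where "ebas i = axis i 1"

definition mu :: "vec3 \<Rightarrow> vec3 \<Rightarrow> vec3" where
  "mu X Y = (X$1 * Y$2 - X$2 * Y$1) *\<^sub>R ebas 3"

definition g0 :: bform where "g0 X Y = X \<bullet> Y"

definition e123 :: tform where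
  "e123 X Y Z = X$1 * (Y$2 * Z$3 - Y$3 * Z$2) - X$2 * (Y$1 * Z$3 - Y$3 * Z$1)
              + X$3 * (Y$1 * Z$2 - Y$2 * Z$1)"

definition gmat :: "bform \<Rightarrow> real^3^3" where
  "gmat g = (\<chi> i j. g (ebas i) (ebas j))"

definition ginv :: "bform \<Rightarrow> real^3^3" where
  "ginv g = matrix_inv (gmat g)"

definition sharp :: "bform \<Rightarrow> (vec3 \<Rightarrow> real) \<Rightarrow> vec3" where
  "sharp g \<theta> = ginv g *v (\<chi> k. \<theta> (ebas k))"

text \<open>Levi-Civita connection of a left-invariant metric (Koszul formula):
  2 g(nabla_X Y, Z) = g([X,Y],Z) - g([Y,Z],X) + g([Z,X],Y).\<close>
definition koszul :: "bform \<Rightarrow> vec3 \<Rightarrow> vec3 \<Rightarrow> vec3 \<Rightarrow> real" where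
  "koszul g X Y Z = (1/2) * (g (mu X Y) Z - g (mu Y Z) X + g (mu Z X) Y)"

definition nabla :: "bform \<Rightarrow> vec3 \<Rightarrow> vec3 \<Rightarrow> vec3" where
  "nabla g X Y = ginv g *v (\<chi> k. koszul g X Y (ebas k))"

definition curv :: "bform \<Rightarrow> vec3 \<Rightarrow> vec3 \<Rightarrow> vec3 \<Rightarrow> vec3" where
  "curv g X Y Z = nabla g X (nabla g Y Z) - nabla g Y (nabla g X Z) - nabla g (mu X Y) Z"

definition ricci :: "bform \<Rightarrow> bform" where
  "ricci g Y Z = (\<Sum>i\<in>UNIV. (curv g (ebas i) Y Z) $ i)"

definition hcirc :: "bform \<Rightarrow> tform \<Rightarrow> bform" where
  "hcirc g H X Y = (\<Sum>r\<in>UNIV. \<Sum>s\<in>UNIV. \<Sum>l\<in>UNIV. \<Sum>t\<in>UNIV.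
      ginv g $ r $ l * ginv g $ s $ t * H X (ebas r) (ebas s) * H Y (ebas l) (ebas t))"

text \<open>Lie derivative of a left-invariant metric along a left-invariant vector field.\<close>
definition lieder :: "vec3 \<Rightarrow> bform \<Rightarrow> bform" where
  "lieder X g Y Z = - g (mu X Y) Z - g Y (mu X Z)"

text \<open>Exterior derivative of a left-invariant 1-form.\<close>
definition d1 :: "(vec3 \<Rightarrow> real) \<Rightarrow> bform" where
  "d1 \<theta> X Y = - \<theta> (mu X Y)"

text \<open>Exterior derivative of a left-invariant (hence constant) function: d f (X) = X f = 0.\<close>
definition d0 :: "real \<Rightarrow> vec3 \<Rightarrow> real" where
  "d0 f X = 0"

definition iota :: "vec3 \<Rightarrow> tform \<Rightarrow> bform" where
  "iota V H X Y = H V X Y"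

definition volg :: "bform \<Rightarrow> tform" where
  "volg g X Y Z = sqrt (det (gmat g)) * e123 X Y Z"

definition hodge3 :: "bform \<Rightarrow> tform \<Rightarrow> real" where
  "hodge3 g H = H (ebas 1) (ebas 2) (ebas 3) / sqrt (det (gmat g))"

definition hodge1 :: "bform \<Rightarrow> (vec3 \<Rightarrow> real) \<Rightarrow> bform" where
  "hodge1 g \<alpha> X Y = volg g (sharp g \<alpha>) X Y"

definition codiff3 :: "bform \<Rightarrow> tform \<Rightarrow> bform" where
  "codiff3 g H = (\<lambda>X Y. - hodge1 g (d0 (hodge3 g H)) X Y)"

definition is_derivation :: "real^3^3 \<Rightarrow> bool" where
  "is_derivation D \<longleftrightarrow> (\<forall>X Y. D *v mu X Y = mu (D *v X) Y + mu X (D *v Y))"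

definition g_symmetric :: "bform \<Rightarrow> real^3^3 \<Rightarrow> bool" where
  "g_symmetric g D \<longleftrightarrow> (\<forall>X Y. g (D *v X) Y = g X (D *v Y))"

end

theory Submission
  imports Defs
begin

text \<open>For the standard metric g0 the Gram matrix is the identity, so all tensor calculus reduces to
  polynomial identities in the coordinates. Ricci curvature is diag(-1/2,-1/2,1/2) and
  H0 o H0 = 2a^2 g0, while d^* H0 = 0 because *H0 is constant. Evaluating the first soliton
  equation on basis pairs and using that a derivation has D e3 = (D11 + D22) e3 forces D to be
  diag(1,1,2), lambda = -(3+a^2)/2 and theta_1 = theta_2 = 0; the second equation then just
  computes omega.\<close>

lemma inner_vec3: "(X::real^3) \<bullet> Y = X$1 * Y$1 + X$2 * Y$2 + X$3 * Y$3"
  by (simp add: inner_vec_def sum_3)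

lemma matrix_vector_mult_vec3:
  "((D::real^3^3) *v X) $ i = D$i$1 * X$1 + D$i$2 * X$2 + D$i$3 * X$3"
  by (simp add: matrix_vector_mult_def sum_3)

lemma matrix_vector_mult_ebas: "(D::real^3^3) *v ebas k = (\<chi> i. D$i$k)"
  by (simp add: vec_eq_iff matrix_vector_mult_def ebas_def axis_def if_distrib cong: if_cong)

lemma ebas_component:
  "ebas 1 $ 1 = 1" "ebas 1 $ 2 = 0" "ebas 1 $ 3 = 0"
  "ebas 2 $ 1 = 0" "ebas 2 $ 2 = 1" "ebas 2 $ 3 = 0"
  "ebas 3 $ 1 = 0" "ebas 3 $ 2 = 0" "ebas 3 $ 3 = 1"
  by (simp_all add: ebas_def axis_def)

lemma mu_component:
  "mu X Y $ 1 = 0" "mu X Y $ 2 = 0" "mu X Y $ 3 = X$1 * Y$2 - X$2 * Y$1"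
  by (simp_all add: mu_def ebas_def axis_def)

lemma gmat_g0: "gmat g0 = mat 1"
  by (simp add: gmat_def g0_def ebas_def inner_axis_axis vec_eq_iff mat_def)

lemma ginv_g0: "ginv g0 = mat 1"
  unfolding ginv_def gmat_g0 matrix_inv_def
  by (rule some_equality) (auto simp: matrix_mul_lid)

lemma sharp_g0: "sharp g0 (\<lambda>X. th \<bullet> X) = th"
  by (simp add: sharp_def ginv_g0 vec_eq_iff forall_3 inner_vec3 ebas_component)

lemma codiff3_eq_zero: "codiff3 g H = (\<lambda>X Y. 0)"
  by (simp add: codiff3_def hodge1_def volg_def d0_def sharp_def e123_def zero_vec_def[symmetric])

lemma nabla_g0_component:
  "nabla g0 X Y $ 1 = (1/2) * (Y$2 * X$3 + X$2 * Y$3)"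
  "nabla g0 X Y $ 2 = - (1/2) * (Y$1 * X$3 + X$1 * Y$3)"
  "nabla g0 X Y $ 3 = (1/2) * (X$1 * Y$2 - X$2 * Y$1)"
  by (simp_all add: nabla_def ginv_g0 koszul_def g0_def inner_vec3 mu_component
      ebas_component algebra_simps)

lemma ricci_g0: "ricci g0 X Y = (1/2) * (X$3 * Y$3 - X$1 * Y$1 - X$2 * Y$2)"
  by (simp add: ricci_def sum_3 curv_def nabla_g0_component mu_component ebas_component
      algebra_simps)

lemma hcirc_g0_volume: "hcirc g0 (\<lambda>X Y Z. a * e123 X Y Z) X Y = 2 * a^2 * (X \<bullet> Y)"
  by (simp add: hcirc_def ginv_g0 sum_3 mat_def e123_def ebas_component inner_vec3
      algebra_simps power2_eq_square)

lemma lieder_g0: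
  "lieder V g0 X Y = - (V$1 * X$2 - V$2 * X$1) * Y$3 - (V$1 * Y$2 - V$2 * Y$1) * X$3"
  by (simp add: lieder_def g0_def inner_vec3 mu_component algebra_simps)

lemma derivation_entries:
  assumes "is_derivation D"
  shows "D$1$3 = 0" "D$2$3 = 0" "D$3$3 = D$1$1 + D$2$2"
proof -
  have "D *v mu (ebas 1) (ebas 2) = mu (D *v ebas 1) (ebas 2) + mu (ebas 1) (D *v ebas 2)"
    using assms unfolding is_derivation_def by blast
  then have "(D *v mu (ebas 1) (ebas 2)) $ i
      = (mu (D *v ebas 1) (ebas 2) + mu (ebas 1) (D *v ebas 2)) $ i" for i
    by simp
  from this[of 1] this[of 2] this[of 3] show "D$1$3 = 0" "D$2$3 = 0" "D$3$3 = D$1$1 + D$2$2"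
    by (simp_all add: matrix_vector_mult_vec3 mu_component ebas_component)
qed

lemma g0_symmetric_entries:
  assumes "g_symmetric g0 D"
  shows "D$j$i = D$i$j"
proof -
  have "g0 (D *v ebas i) (ebas j) = g0 (ebas i) (D *v ebas j)"
    using assms unfolding g_symmetric_def by blast
  then show ?thesis
    unfolding matrix_vector_mult_ebas by (simp add: g0_def ebas_def inner_axis' inner_axis)
qed

lemma ricci_soliton_g0_iff:
  "ricci g0 = (\<lambda>X Y. lam * g0 X Y + g0 (D *v X) Y
                      + (1/4) * hcirc g0 (\<lambda>X Y Z. a * e123 X Y Z) X Y - (1/4) * lieder V g0 X Y)
   \<longleftrightarrow> (\<forall>X Y. (1/2) * (X$3 * Y$3 - X$1 * Y$1 - X$2 * Y$2)
          = (lam + a^2/2) * (X \<bullet> Y) + (D *v X) \<bullet> Y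
            + (1/4) * ((V$1 * X$2 - V$2 * X$1) * Y$3 + (V$1 * Y$2 - V$2 * Y$1) * X$3))"
  by (simp add: fun_eq_iff ricci_g0 hcirc_g0_volume lieder_g0 g0_def algebra_simps)

lemma ricci_soliton_g0_solution:
  assumes "is_derivation D" and "g_symmetric g0 D"
  shows "ricci g0 = (\<lambda>X Y. lam * g0 X Y + g0 (D *v X) Y
                      + (1/4) * hcirc g0 (\<lambda>X Y Z. a * e123 X Y Z) X Y - (1/4) * lieder V g0 X Y)
   \<longleftrightarrow> lam = - (3 + a^2) / 2 \<and> D = (\<chi> i j. if i = j then (if i = 3 then 2 else 1) else 0)
       \<and> V $ 1 = 0 \<and> V $ 2 = 0"
    (is "_ \<longleftrightarrow> ?solution")
proof -
  have der: "D$1$3 = 0" "D$2$3 = 0" "D$3$3 = D$1$1 + D$2$2"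
    using derivation_entries[OF assms(1)] .
  have sym: "D$2$1 = D$1$2" "D$3$1 = D$1$3" "D$3$2 = D$2$3"
    using g0_symmetric_entries[OF assms(2)] by blast+
  let ?eq = "\<lambda>X Y. (1/2) * (X$3 * Y$3 - X$1 * Y$1 - X$2 * Y$2)
          = (lam + a^2/2) * (X \<bullet> Y) + (D *v X) \<bullet> Y
            + (1/4) * ((V$1 * X$2 - V$2 * X$1) * Y$3 + (V$1 * Y$2 - V$2 * Y$1) * X$3)"
  have "(\<forall>X Y. ?eq X Y) \<longleftrightarrow> ?solution"
  proof
    assume all: "\<forall>X Y. ?eq X Y"
    have basis: "?eq (ebas 1) (ebas 1)" "?eq (ebas 2) (ebas 2)" "?eq (ebas 3) (ebas 3)"
      "?eq (ebas 1) (ebas 2)" "?eq (ebas 1) (ebas 3)" "?eq (ebas 2) (ebas 3)"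
      using all by blast+
    note coords = basis[unfolded inner_vec3 matrix_vector_mult_vec3 ebas_component]
    have "lam = - (3 + a^2) / 2" "D$1$1 = 1" "D$2$2 = 1" "D$1$2 = 0"
      "V$1 = 0" "V$2 = 0"
      using coords der sym by (simp_all add: algebra_simps)
    then show ?solution
      by (simp add: vec_eq_iff forall_3 der sym)
  next
    assume ?solution
    then have lam: "lam = - (3 + a^2) / 2"
      and D: "D = (\<chi> i j. if i = j then (if i = 3 then 2 else 1) else 0)"
      and V: "V $ 1 = 0" "V $ 2 = 0"
      by blast+
    show "\<forall>X Y. ?eq X Y"
      unfolding lam D V
      by (simp add: inner_vec3 matrix_vector_mult_def sum_3 field_simps power2_eq_square)
  qed
  then show ?thesis
    unfolding ricci_soliton_g0_iff .
qed

lemma torsion_form_g0: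
  "(\<lambda>X Y. - codiff3 g0 (\<lambda>X Y Z. a * e123 X Y Z) X Y + (1/2) * d1 (\<lambda>X. th \<bullet> X) X Y
          - (1/2) * iota th (\<lambda>X Y Z. a * e123 X Y Z) X Y)
   = (\<lambda>X Y. - (1/2) * th$3 * (X$1 * Y$2 - X$2 * Y$1)
            - (1/2) * a * (th$1 * (X$2 * Y$3 - X$3 * Y$2) - th$2 * (X$1 * Y$3 - X$3 * Y$1)
                           + th$3 * (X$1 * Y$2 - X$2 * Y$1)))"
  by (simp add: codiff3_eq_zero d1_def iota_def e123_def inner_vec3 mu_component algebra_simps)

theorem mainTheorem6:
  fixes a lam :: real and th :: "real^3" and \<omega> :: bform and D :: "real^3^3"
  assumes "is_derivation D" and "g_symmetric g0 D"
  defines "H0 \<equiv> (\<lambda>X Y Z. a * e123 X Y Z)"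
      and "\<theta>0 \<equiv> (\<lambda>X. th \<bullet> X)"
  shows "(ricci g0 = (\<lambda>X Y. lam * g0 X Y + g0 (D *v X) Y + (1/4) * hcirc g0 H0 X Y
                          - (1/4) * lieder (sharp g0 \<theta>0) g0 X Y)
          \<and> \<omega> = (\<lambda>X Y. - codiff3 g0 H0 X Y + (1/2) * d1 \<theta>0 X Y
                          - (1/2) * iota (sharp g0 \<theta>0) H0 X Y))
     \<longleftrightarrow>
         (lam = - (3 + a^2) / 2
          \<and> D = (\<chi> i j. if i = j then (if i = 3 then 2 else 1) else 0)
          \<and> th $ 1 = 0 \<and> th $ 2 = 0
          \<and> \<omega> = (\<lambda>X Y. - (1/2) * th $ 3 * (1 + a) * (X$1 * Y$2 - X$2 * Y$1)))"
proof -
  have torsion_reduced: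
    "th $ 1 = 0 \<Longrightarrow> th $ 2 = 0 \<Longrightarrow>
      (\<lambda>X Y. - codiff3 g0 H0 X Y + (1/2) * d1 \<theta>0 X Y - (1/2) * iota (sharp g0 \<theta>0) H0 X Y)
      = (\<lambda>X Y. - (1/2) * th $ 3 * (1 + a) * (X$1 * Y$2 - X$2 * Y$1))"
    unfolding H0_def \<theta>0_def sharp_g0 torsion_form_g0 by (simp add: fun_eq_iff algebra_simps)
  show ?thesis
    unfolding H0_def \<theta>0_def sharp_g0 ricci_soliton_g0_solution[OF assms(1,2)]
    using torsion_reduced[unfolded H0_def \<theta>0_def sharp_g0] by auto
qed

end
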